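(* Suppose $(Y,y_0)$ is sequentially $0$-connected and $(X,x_0)$ is well-pointed, i.e. $\{x_0\}\to X$ is a cofibration. Then every sequence $\{f_k\}_{k\in\mathbb{N}}$ of (unbased) maps $X\to Y$ that converges to $y_0$ is sequentially homotopic to a sequence $\{g_k\}_{k\in\mathbb{N}}$ of based maps $(X,x_0)\to(Y,y_0)$ that converges to $y_0$.
   Context: All spaces Hausdorff. A sequence of maps $\{f_k\}$ into $Y$ converges to $y_0$ if for every neighborhood $U$ of $y_0$, $\operatorname{Im}(f_k)\subseteq U$ for all but finitely many $k$. Sequences $\{f_k\},\{g_k\}$ converging to $y_0$ are sequentially homotopic if there are free homotopies $H_k$ from $f_k$ to $g_k$ with $\{H_k\}$ converging to $y_0$. $(Y,y_0)$ is sequentially $0$-connected if the set of based homotopy classes $[(\mathbb{H}_0,0),(Y,y_0)]$ is a singleton, where $\mathbb{H}_0=\{0\}\cup\{1/m:m\in\mathbb{N}\}\subseteq\mathbb{R}$ with basepoint $0$. *)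

theory Defs
  imports "HOL-Analysis.Analysis"
begin

definition H0 :: "real set" where
  "H0 = {0} \<union> {1 / real m | m. m \<ge> 1}"

definition map_seq_converges :: "'c topology \<Rightarrow> 'b topology \<Rightarrow> (nat \<Rightarrow> 'c \<Rightarrow> 'b) \<Rightarrow> 'b \<Rightarrow> bool" where
  "map_seq_converges Z Y fs y0 \<longleftrightarrow>
     (\<forall>U. openin Y U \<and> y0 \<in> U \<longrightarrow> eventually (\<lambda>k. fs k ` topspace Z \<subseteq> U) sequentially)"

definition seq_homotopic :: "'a topology \<Rightarrow> 'b topology \<Rightarrow> (nat \<Rightarrow> 'a \<Rightarrow> 'b) \<Rightarrow> (nat \<Rightarrow> 'a \<Rightarrow> 'b) \<Rightarrow> 'b \<Rightarrow> bool" where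
  "seq_homotopic X Y f g y0 \<longleftrightarrow>
     (\<exists>H :: nat \<Rightarrow> 'a \<times> real \<Rightarrow> 'b.
        (\<forall>k. continuous_map (prod_topology X (top_of_set {0..(1::real)})) Y (H k)
             \<and> (\<forall>x\<in>topspace X. H k (x, 0) = f k x \<and> H k (x, 1) = g k x))
        \<and> map_seq_converges (prod_topology X (top_of_set {0..(1::real)})) Y H y0)"

definition based_maps :: "'c topology \<Rightarrow> 'c \<Rightarrow> 'b topology \<Rightarrow> 'b \<Rightarrow> ('c \<Rightarrow> 'b) set" where
  "based_maps Z z0 Y y0 = {f. continuous_map Z Y f \<and> f z0 = y0}"

definition based_homotopic :: "'c topology \<Rightarrow> 'c \<Rightarrow> 'b topology \<Rightarrow> 'b \<Rightarrow> ('c \<Rightarrow> 'b) \<Rightarrow> ('c \<Rightarrow> 'b) \<Rightarrow> bool" where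
  "based_homotopic Z z0 Y y0 f g \<longleftrightarrow>
     (\<exists>h. continuous_map (prod_topology Z (top_of_set {0..(1::real)})) Y h
        \<and> (\<forall>x\<in>topspace Z. h (x, 0) = f x \<and> h (x, 1) = g x)
        \<and> (\<forall>t\<in>{0..1}. h (z0, t) = y0))"

definition based_homotopy_classes :: "'c topology \<Rightarrow> 'c \<Rightarrow> 'b topology \<Rightarrow> 'b \<Rightarrow> ('c \<Rightarrow> 'b) set set" where
  "based_homotopy_classes Z z0 Y y0 =
     (\<lambda>f. {g \<in> based_maps Z z0 Y y0. based_homotopic Z z0 Y y0 f g}) ` based_maps Z z0 Y y0"

definition seq_0_connected :: "'b topology \<Rightarrow> 'b \<Rightarrow> bool" where
  "seq_0_connected Y y0 \<longleftrightarrow> is_singleton (based_homotopy_classes (top_of_set H0) 0 Y y0)"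

definition HEP_wrt :: "'c itself \<Rightarrow> 'a topology \<Rightarrow> 'a set \<Rightarrow> bool" where
  "HEP_wrt _ X A \<longleftrightarrow>
     (\<forall>(Z :: 'c topology) f h.
        continuous_map X Z f
        \<and> continuous_map (prod_topology (subtopology X A) (top_of_set {0..(1::real)})) Z h
        \<and> (\<forall>a\<in>A. h (a, 0) = f a)
        \<longrightarrow> (\<exists>H. continuous_map (prod_topology X (top_of_set {0..(1::real)})) Z H
               \<and> (\<forall>x\<in>topspace X. H (x, 0) = f x)
               \<and> (\<forall>a\<in>A. \<forall>t\<in>{0..1}. H (a, t) = h (a, t))))"

text \<open>Well-pointed: {x0} \<rightarrow> X is a cofibration (HEP w.r.t. all test spaces; test spaces
  with point type 'a \<times> real suffice, since they include X \<times> 0 \<union> {x0} \<times> I).\<close>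
definition well_pointed :: "'a topology \<Rightarrow> 'a \<Rightarrow> bool" where
  "well_pointed X x0 \<longleftrightarrow> x0 \<in> topspace X \<and> HEP_wrt TYPE('a \<times> real) X {x0}"

end

theory Submission
  imports Defs
begin

(* Since f_k(x0) tends to y0, the map H0 -> Y sending 1/(k+1) to f_k(x0) and 0 to y0 is a
   continuous based map.  Sequential 0-connectedness makes it based homotopic to the constant map,
   and restricting that homotopy to the points 1/(k+1) gives paths alpha_k from f_k(x0) to y0; by
   the tube lemma around {0} x [0,1] they converge to y0.  Well-pointedness makes
   X x {0} u {x0} x [0,1] a retract of X x [0,1].  Composing the retraction with f_k on the bottom
   and alpha_k on the vertical segment gives homotopies G_k whose images lie in
   im f_k u im alpha_k, so they converge to y0, and g_k = G_k(-,1) is based because alpha_k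
   ends at y0. *)

lemma continuous_map_cases_closedin:
  assumes "closedin X S" and "closedin X T" and "topspace X \<subseteq> S \<union> T"
    and "continuous_map (subtopology X S) Y f" and "continuous_map (subtopology X T) Y g"
    and "\<And>x. x \<in> topspace X \<inter> S \<inter> T \<Longrightarrow> f x = g x"
  shows "continuous_map X Y (\<lambda>x. if x \<in> S then f x else g x)"
  by (rule pasting_lemma_closed[where I = "{True, False}" and T = "\<lambda>b. if b then S else T"
        and f = "\<lambda>b. if b then f else g"]) (use assms in auto)

lemma map_seq_converges_image_subset_Un:
  assumes "map_seq_converges Z1 Y f1 y0" and "map_seq_converges Z2 Y f2 y0"
    and sub: "\<And>k. g k ` topspace Z \<subseteq> f1 k ` topspace Z1 \<union> f2 k ` topspace Z2"
  shows "map_seq_converges Z Y g y0"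
  unfolding map_seq_converges_def
proof (intro allI impI)
  fix U assume U: "openin Y U \<and> y0 \<in> U"
  have "eventually (\<lambda>k. f1 k ` topspace Z1 \<subseteq> U) sequentially"
    and "eventually (\<lambda>k. f2 k ` topspace Z2 \<subseteq> U) sequentially"
    using assms(1,2) U by (simp_all add: map_seq_converges_def)
  then show "eventually (\<lambda>k. g k ` topspace Z \<subseteq> U) sequentially"
    by (rule eventually_elim2) (metis sub Un_least order_trans)
qed

lemma map_seq_converges_image_subset:
  assumes "map_seq_converges Z' Y f y0" and "\<And>k. g k ` topspace Z \<subseteq> f k ` topspace Z'"
  shows "map_seq_converges Z Y g y0"
  by (rule map_seq_converges_image_subset_Un[OF assms(1) assms(1)]) (simp add: assms(2))

lemma limitin_map_seq_converges:
  assumes "map_seq_converges Z Y f y0" and "y0 \<in> topspace Y" and "z \<in> topspace Z"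
  shows "limitin Y (\<lambda>k. f k z) y0 sequentially"
  unfolding limitin_def
proof (intro conjI allI impI)
  fix U assume "openin Y U \<and> y0 \<in> U"
  then have "eventually (\<lambda>k. f k ` topspace Z \<subseteq> U) sequentially"
    using assms(1) unfolding map_seq_converges_def by blast
  then show "eventually (\<lambda>k. f k z \<in> U) sequentially"
    by (rule eventually_mono) (use assms(3) in blast)
qed (rule assms(2))

lemma based_homotopic_refl:
  assumes "f \<in> based_maps Z z0 Y y0"
  shows "based_homotopic Z z0 Y y0 f f"
  using assms unfolding based_homotopic_def based_maps_def
  by (intro exI[of _ "f \<circ> fst"]) (auto intro: continuous_map_compose continuous_map_fst)

lemma H0_eq: "H0 = insert 0 (range (\<lambda>k. 1 / (1 + real k)))"
proof -
  have "{1 / real m | m. m \<ge> 1} = range (\<lambda>k. 1 / (1 + real k))"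
    by (force simp: Suc_le_eq gr0_conv_Suc)
  then show ?thesis by (simp add: H0_def)
qed

lemma openin_H0_singleton: "openin (top_of_set H0) {1 / (1 + real k)}"
proof -
  \<comment> \<open>the interval consists of the s > 0 with k + 1/2 < 1/s < k + 3/2\<close>
  have "H0 \<inter> {2 / (2 * real k + 3) <..< 2 / (2 * real k + 1)} = {1 / (1 + real k)}"
    by (auto simp: H0_eq field_simps)
  then show ?thesis
    by (metis open_greaterThanLessThan openin_open_Int)
qed

lemma limitin_H0_reciprocals: "limitin (top_of_set H0) (\<lambda>k. 1 / (1 + real k)) 0 sequentially"
  using LIMSEQ_Suc[OF lim_1_over_n] by (simp add: limitin_subtopology H0_eq)

definition H0_sequence_map :: "'b \<Rightarrow> (nat \<Rightarrow> 'b) \<Rightarrow> real \<Rightarrow> 'b" where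
  "H0_sequence_map y0 y s = (if s = 0 then y0 else y (nat \<lfloor>1 / s\<rfloor> - 1))"

lemma H0_sequence_map_0 [simp]: "H0_sequence_map y0 y 0 = y0"
  by (simp add: H0_sequence_map_def)

lemma H0_sequence_map_reciprocal [simp]: "H0_sequence_map y0 y (1 / (1 + real k)) = y k"
  by (simp add: H0_sequence_map_def nat_add_distrib)

lemma continuous_map_H0_sequence_map:
  assumes lim: "limitin Y y y0 sequentially" and y: "\<And>k. y k \<in> topspace Y"
  shows "continuous_map (top_of_set H0) Y (H0_sequence_map y0 y)"
  unfolding continuous_map_openin_preimage_eq
proof (intro conjI allI impI)
  show "H0_sequence_map y0 y \<in> topspace (top_of_set H0) \<rightarrow> topspace Y"
    using lim y by (auto simp: H0_eq limitin_def)
next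
  fix U assume U: "openin Y U"
  let ?P = "topspace (top_of_set H0) \<inter> H0_sequence_map y0 y -` U"
  have "\<exists>T. openin (top_of_set H0) T \<and> s \<in> T \<and> T \<subseteq> ?P" if s: "s \<in> ?P" for s
  proof -
    from s have "s \<in> H0" by simp
    then consider "s = 0" | k where "s = 1 / (1 + real k)" by (auto simp: H0_eq)
    then show ?thesis
    proof cases
      case 1
      with s U lim obtain N where N: "\<And>k. k \<ge> N \<Longrightarrow> y k \<in> U"
        by (auto simp: limitin_sequentially)
      let ?T = "H0 \<inter> {..< 1 / (1 + real N)}"
      have "openin (top_of_set H0) ?T" by (simp add: openin_open_Int)
      moreover have "?T \<subseteq> ?P"
        using s 1 N by (auto simp: H0_eq field_simps)
      ultimately show ?thesis using 1 s by auto
    next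
      case 2
      then show ?thesis using s openin_H0_singleton by blast
    qed
  qed
  then show "openin (top_of_set H0) ?P" by (subst openin_subopen) blast
qed

lemma seq_0_connected_imp_based_homotopic:
  assumes "seq_0_connected Y y0"
    and p: "p \<in> based_maps (top_of_set H0) 0 Y y0" and q: "q \<in> based_maps (top_of_set H0) 0 Y y0"
  shows "based_homotopic (top_of_set H0) 0 Y y0 p q"
proof -
  let ?class = "\<lambda>f. {g \<in> based_maps (top_of_set H0) 0 Y y0. based_homotopic (top_of_set H0) 0 Y y0 f g}"
  obtain c where c: "?class ` based_maps (top_of_set H0) 0 Y y0 = {c}"
    using assms(1) unfolding seq_0_connected_def based_homotopy_classes_def is_singleton_def by blast
  have "?class p = c" "?class q = c"
    using imageI[OF p, of ?class] imageI[OF q, of ?class] unfolding c by simp_all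
  moreover have "q \<in> ?class q" using q by (simp add: based_homotopic_refl)
  ultimately show ?thesis by blast
qed

lemma map_seq_converges_H0_slices:
  assumes h: "continuous_map (prod_topology (top_of_set H0) Z) Y h"
    and "compact_space Z" and h0: "\<And>z. z \<in> topspace Z \<Longrightarrow> h (0, z) = y0"
  shows "map_seq_converges Z Y (\<lambda>k z. h (1 / (1 + real k), z)) y0"
  unfolding map_seq_converges_def
proof (intro allI impI)
  fix U assume U: "openin Y U \<and> y0 \<in> U"
  define W where "W = {w \<in> topspace (prod_topology (top_of_set H0) Z). h w \<in> U}"
  have W: "openin (prod_topology (top_of_set H0) Z) W"
    unfolding W_def using h U by (blast intro: openin_continuous_map_preimage)
  have Z: "compactin Z (topspace Z)"
    using \<open>compact_space Z\<close> by (simp add: compact_space_def)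
  have "{0} \<times> topspace Z \<subseteq> W"
    using U h0 by (auto simp: W_def H0_eq)
  from tube_lemma_right[OF W Z _ this]
  obtain V V' where "openin (top_of_set H0) V" "0 \<in> V" "topspace Z \<subseteq> V'" "V \<times> V' \<subseteq> W"
    by (auto simp: H0_eq)
  then have "eventually (\<lambda>k. {1 / (1 + real k)} \<times> topspace Z \<subseteq> W) sequentially"
    using limitin_H0_reciprocals unfolding limitin_def by (fast elim: eventually_mono)
  then show "eventually (\<lambda>k. (\<lambda>z. h (1 / (1 + real k), z)) ` topspace Z \<subseteq> U) sequentially"
    by (rule eventually_mono) (auto simp: W_def)
qed

lemma seq_0_connected_convergent_paths:
  assumes "seq_0_connected Y y0" and lim: "limitin Y y y0 sequentially"
    and y: "\<And>k. y k \<in> topspace Y"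
  obtains \<alpha> :: "nat \<Rightarrow> real \<Rightarrow> 'b"
  where "\<And>k. continuous_map (top_of_set {0..1}) Y (\<alpha> k)"
    and "\<And>k. \<alpha> k 0 = y k" and "\<And>k. \<alpha> k 1 = y0"
    and "map_seq_converges (top_of_set {0..1}) Y \<alpha> y0"
proof -
  have y0: "y0 \<in> topspace Y" using lim by (simp add: limitin_def)
  have "H0_sequence_map y0 y \<in> based_maps (top_of_set H0) 0 Y y0"
    using continuous_map_H0_sequence_map[OF lim y] by (simp add: based_maps_def)
  moreover have "(\<lambda>_. y0) \<in> based_maps (top_of_set H0) 0 Y y0"
    using y0 by (simp add: based_maps_def)
  ultimately have "based_homotopic (top_of_set H0) 0 Y y0 (H0_sequence_map y0 y) (\<lambda>_. y0)"
    by (rule seq_0_connected_imp_based_homotopic[OF \<open>seq_0_connected Y y0\<close>])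
  then obtain h where h: "continuous_map (prod_topology (top_of_set H0) (top_of_set {0..1::real})) Y h"
    and h01: "\<forall>s\<in>H0. h (s, 0) = H0_sequence_map y0 y s \<and> h (s, 1) = y0"
    and hbase: "\<forall>t\<in>{0..1}. h (0, t) = y0"
    unfolding based_homotopic_def topspace_euclidean_subtopology by blast
  show ?thesis
  proof
    fix k
    have "continuous_map (top_of_set {0..1}) (prod_topology (top_of_set H0) (top_of_set {0..1}))
        (\<lambda>t. (1 / (1 + real k), t))"
      by (intro continuous_map_pairedI continuous_map_id[unfolded id_def]) (simp add: H0_eq)
    from continuous_map_compose[OF this h]
    show "continuous_map (top_of_set {0..1}) Y (\<lambda>t. h (1 / (1 + real k), t))"
      by (simp add: o_def)
    show "h (1 / (1 + real k), 0) = y k" "h (1 / (1 + real k), 1) = y0"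
      using h01 by (simp_all add: H0_eq)
  next
    have "compact_space (top_of_set {0..1::real})"
      by (simp add: compact_space_subtopology)
    then show "map_seq_converges (top_of_set {0..1}) Y (\<lambda>k t. h (1 / (1 + real k), t)) y0"
      using h hbase by (intro map_seq_converges_H0_slices) auto
  qed
qed

lemma HEP_wrt_imp_retract:
  fixes X :: "'a topology"
  assumes HEP: "HEP_wrt TYPE('a \<times> real) X A" and A: "A \<subseteq> topspace X"
  shows "(topspace X \<times> {0} \<union> A \<times> {0..1}) retract_of_space prod_topology X (top_of_set {0..1::real})"
proof -
  define XI where "XI = prod_topology X (top_of_set {0..1::real})"
  define B where "B = topspace X \<times> {0} \<union> A \<times> {0..1::real}"
  have B: "B \<subseteq> topspace XI" using A by (auto simp: B_def XI_def)
  have "continuous_map X (subtopology XI B) (\<lambda>x. (x, 0))"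
    unfolding XI_def
    by (intro continuous_map_into_subtopology continuous_map_pairedI continuous_map_id[unfolded id_def])
       (auto simp: B_def)
  moreover have "continuous_map (prod_topology (subtopology X A) (top_of_set {0..1})) (subtopology XI B) (\<lambda>z. z)"
    unfolding prod_topology_subtopology(1) XI_def
    by (intro continuous_map_into_subtopology continuous_map_from_subtopology continuous_map_id[unfolded id_def])
       (auto simp: B_def)
  ultimately obtain r where r: "continuous_map XI (subtopology XI B) r"
    and "\<forall>x\<in>topspace X. r (x, 0) = (x, 0)" and "\<forall>a\<in>A. \<forall>t\<in>{0..1}. r (a, t) = (a, t)"
    using HEP[unfolded HEP_wrt_def, rule_format, of "subtopology XI B" "\<lambda>x. (x, 0)" "\<lambda>z. z"]
    unfolding XI_def by auto
  then have "\<forall>z\<in>B. r z = z"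
    unfolding B_def by blast
  with B r have "B retract_of_space XI"
    unfolding retract_of_space_def by blast
  then show ?thesis by (simp add: B_def XI_def)
qed

lemma well_pointed_homotopies_along_paths:
  fixes \<alpha> :: "nat \<Rightarrow> real \<Rightarrow> 'b"
  assumes "well_pointed X x0" and "closedin X {x0}"
    and f: "\<And>k. continuous_map X Y (f k)" and \<alpha>: "\<And>k. continuous_map (top_of_set {0..1}) Y (\<alpha> k)"
    and \<alpha>0: "\<And>k. \<alpha> k 0 = f k x0"
  obtains G where "\<And>k. continuous_map (prod_topology X (top_of_set {0..1})) Y (G k)"
    and "\<And>k x. x \<in> topspace X \<Longrightarrow> G k (x, 0) = f k x"
    and "\<And>k t. t \<in> {0..1} \<Longrightarrow> G k (x0, t) = \<alpha> k t"
    and "\<And>k. G k ` topspace (prod_topology X (top_of_set {0..1})) \<subseteq> f k ` topspace X \<union> \<alpha> k ` {0..1}"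
proof -
  define XI where "XI = prod_topology X (top_of_set {0..1::real})"
  define B where "B = topspace X \<times> {0} \<union> {x0} \<times> {0..1::real}"
  have x0: "x0 \<in> topspace X"
    using \<open>well_pointed X x0\<close> by (simp add: well_pointed_def)
  then have "B retract_of_space XI"
    using \<open>well_pointed X x0\<close> HEP_wrt_imp_retract unfolding well_pointed_def B_def XI_def by blast
  then obtain r where r: "continuous_map XI (subtopology XI B) r" and rB: "\<And>z. z \<in> B \<Longrightarrow> r z = z"
    unfolding retract_of_space_def by blast
  define F where "F k z = (if z \<in> {x0} \<times> {0..1} then \<alpha> k (snd z) else f k (fst z))" for k z
  have F: "continuous_map (subtopology XI B) Y (F k)" for k
    unfolding F_def
  proof (rule continuous_map_cases_closedin)
    have "closedin XI ({x0} \<times> {0..1})"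
      using \<open>closedin X {x0}\<close> by (simp add: XI_def closedin_prod_Times_iff)
    then show "closedin (subtopology XI B) ({x0} \<times> {0..1})"
      by (rule closedin_subset_topspace) (auto simp: B_def)
    have "closedin XI (topspace X \<times> {0})"
      by (simp add: XI_def closedin_prod_Times_iff)
    then show "closedin (subtopology XI B) (topspace X \<times> {0})"
      by (rule closedin_subset_topspace) (auto simp: B_def)
    show "topspace (subtopology XI B) \<subseteq> {x0} \<times> {0..1} \<union> topspace X \<times> {0}"
      by (auto simp: B_def)
    show "continuous_map (subtopology (subtopology XI B) ({x0} \<times> {0..1})) Y (\<lambda>z. \<alpha> k (snd z))"
      unfolding XI_def
      by (intro continuous_map_from_subtopology continuous_map_compose[OF continuous_map_snd \<alpha>, unfolded o_def])
    show "continuous_map (subtopology (subtopology XI B) (topspace X \<times> {0})) Y (\<lambda>z. f k (fst z))"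
      unfolding XI_def
      by (intro continuous_map_from_subtopology continuous_map_compose[OF continuous_map_fst f, unfolded o_def])
    show "\<alpha> k (snd z) = f k (fst z)"
      if "z \<in> topspace (subtopology XI B) \<inter> {x0} \<times> {0..1} \<inter> topspace X \<times> {0}" for z
      using that \<alpha>0 by auto
  qed
  show ?thesis
  proof
    show "continuous_map (prod_topology X (top_of_set {0..1})) Y (F k \<circ> r)" for k
      using continuous_map_compose[OF r F] by (simp add: XI_def)
    show "(F k \<circ> r) (x, 0) = f k x" if "x \<in> topspace X" for k x
      using that \<alpha>0 by (simp add: rB B_def F_def)
    show "(F k \<circ> r) (x0, t) = \<alpha> k t" if "t \<in> {0..1}" for k t
      using that by (simp add: rB B_def F_def)
    show "(F k \<circ> r) ` topspace (prod_topology X (top_of_set {0..1}))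
        \<subseteq> f k ` topspace X \<union> \<alpha> k ` {0..1}" for k
    proof (rule image_subsetI)
      fix z assume "z \<in> topspace (prod_topology X (top_of_set {0..1::real}))"
      then have "r z \<in> B"
        using continuous_map_image_subset_topspace[OF r] by (auto simp: XI_def)
      then show "(F k \<circ> r) z \<in> f k ` topspace X \<union> \<alpha> k ` {0..1}"
        by (auto simp: B_def F_def)
    qed
  qed
qed

theorem proposition2p27:
  fixes X :: "'a topology" and Y :: "'b topology" and x0 :: 'a and y0 :: 'b
    and f :: "nat \<Rightarrow> 'a \<Rightarrow> 'b"
  assumes "Hausdorff_space X" and "Hausdorff_space Y"
    and "y0 \<in> topspace Y"
    and "seq_0_connected Y y0"
    and "well_pointed X x0"
    and "\<forall>k. continuous_map X Y (f k)"
    and "map_seq_converges X Y f y0"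
  shows "\<exists>g :: nat \<Rightarrow> 'a \<Rightarrow> 'b.
           (\<forall>k. g k \<in> based_maps X x0 Y y0)
           \<and> map_seq_converges X Y g y0
           \<and> seq_homotopic X Y f g y0"
proof -
  let ?XI = "prod_topology X (top_of_set {0..1::real})"
  have x0: "x0 \<in> topspace X"
    using assms(5) by (simp add: well_pointed_def)
  have f: "\<And>k. continuous_map X Y (f k)"
    using assms(6) by blast
  then have fx0: "f k x0 \<in> topspace Y" for k
    using x0 by (simp add: continuous_map_def Pi_iff)
  obtain \<alpha> :: "nat \<Rightarrow> real \<Rightarrow> 'b" where \<alpha>: "\<And>k. continuous_map (top_of_set {0..1}) Y (\<alpha> k)"
    and \<alpha>0: "\<And>k. \<alpha> k 0 = f k x0" and \<alpha>1: "\<And>k. \<alpha> k 1 = y0"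
    and \<alpha>_conv: "map_seq_converges (top_of_set {0..1}) Y \<alpha> y0"
    using seq_0_connected_convergent_paths[OF assms(4) limitin_map_seq_converges[OF assms(7,3) x0] fx0]
    by blast
  obtain G where G: "\<And>k. continuous_map ?XI Y (G k)"
    and G0: "\<And>k x. x \<in> topspace X \<Longrightarrow> G k (x, 0) = f k x"
    and G_x0: "\<And>k t. t \<in> {0..1} \<Longrightarrow> G k (x0, t) = \<alpha> k t"
    and G_image: "\<And>k. G k ` topspace ?XI \<subseteq> f k ` topspace X \<union> \<alpha> k ` {0..1}"
    using well_pointed_homotopies_along_paths[where f = f and \<alpha> = \<alpha>,
        OF assms(5) closedin_Hausdorff_singleton[OF assms(1) x0] f \<alpha> \<alpha>0] by blast
  have G_conv: "map_seq_converges ?XI Y G y0"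
    using G_image by (intro map_seq_converges_image_subset_Un[OF assms(7) \<alpha>_conv]) simp
  define g where "g k = G k \<circ> (\<lambda>x. (x, 1))" for k
  have "continuous_map X ?XI (\<lambda>x. (x, 1))"
    by (intro continuous_map_pairedI continuous_map_id[unfolded id_def]) simp
  then have "g k \<in> based_maps X x0 Y y0" for k
    using continuous_map_compose[OF _ G] G_x0[of 1 k] \<alpha>1 by (simp add: g_def based_maps_def)
  moreover have "map_seq_converges X Y g y0"
    using G_conv by (rule map_seq_converges_image_subset) (auto simp: g_def)
  moreover have "seq_homotopic X Y f g y0"
    unfolding seq_homotopic_def using G G0 G_conv by (auto simp: g_def)
  ultimately show ?thesis by blast
qed

end
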